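(* There is a universal constant $c>0$ such that for every continuous distribution function $F$ and all integers $K\ge 1$, $N\ge 2(K+1)$, $$\mathbb P\Big(\min_{1\le l\le K+1} a_l\ \ge\ 1-\tfrac1K\Big)\ \ge\ cK^{-3},\qquad\text{where } a_l:=F^{(K+1)}\Big(\sum_{i=l}^{l+K}Y_i\Big).$$
   Context: Let $F$ be a continuous distribution function on $\mathbb R$ and $Y_1,\dots,Y_N$ i.i.d. with law $F$ (indices modulo $N$). $F^{(K+1)}$ denotes the distribution function of the sum of $K+1$ independent random variables with law $F$. *)

theory Defs
  imports "HOL-Probability.Probability"
begin

text \<open>Distribution function of the sum of m independent random variables with law mu,
  i.e. the m-fold convolution power of the distribution function of mu.\<close>
definition conv_pow_cdf :: "real measure \<Rightarrow> nat \<Rightarrow> real \<Rightarrow> real" where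
  "conv_pow_cdf \<mu> m x =
     measure (PiM {..<m} (\<lambda>_. \<mu>))
       {\<omega> \<in> space (PiM {..<m} (\<lambda>_. \<mu>)). (\<Sum>i<m. \<omega> i) \<le> x}"

end

theory Submission
  imports Defs
begin

(* Write S_l for the l-th window sum and d_j = Y_(K+1+j) - Y_j, so that
   S_l = S_0 + d_0 + ... + d_(l-1) for l <= K. If these partial sums lie above their chord,
   every S_l is at least min S_0 S_K; F^(K+1) being monotone, all a_l >= t = 1 - 1/K as soon
   as a_0 and a_K are. Rotating the blocks Y_0..Y_(K-1) and Y_(K+1)..Y_(2K) simultaneously
   preserves the law, S_0 and S_K, and shifts d cyclically; by the cycle lemma one of the K
   rotations puts the partial sums above the chord, which costs a factor K. Finally S_0 and
   S_K share only Y_K and are otherwise independent copies, so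
   P(a_0 >= t, a_K >= t) >= P(a_0 >= t)^2 >= 1/K^2, since P(G(X) < t) <= t for the
   distribution function G of any X. *)

lemma sum_fun_upd_remove:
  assumes "finite L" "k \<in> L"
  shows "(\<Sum>i\<in>L. (X(k := c)) i) = c + (\<Sum>i\<in>L - {k}. X i)"
proof -
  have "(\<Sum>i\<in>L - {k}. (X(k := c)) i) = (\<Sum>i\<in>L - {k}. X i)" by (rule sum.cong) auto
  then show ?thesis using assms by (simp add: sum.remove[of L k])
qed

lemma sum_lessThan_shift:
  fixes f :: "nat \<Rightarrow> 'a::ab_group_add"
  shows "(\<Sum>j<m. f (j + r)) = (\<Sum>j<m + r. f j) - (\<Sum>j<r. f j)"
  by (induction m) (simp_all add: add.commute)

lemma sum_reindex_inj_endo: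
  assumes "finite A" "inj_on f A" "f ` A \<subseteq> A"
  shows "(\<Sum>i\<in>A. g (f i)) = (\<Sum>i\<in>A. g i)"
  using sum.reindex[OF assms(2), of g] endo_inj_surj[OF assms(1,3,2)] by simp

lemma inj_on_add_mod:
  fixes K r :: nat
  shows "inj_on (\<lambda>j. (j + r) mod K) {..<K}"
proof (rule inj_onI)
  fix a b assume "a \<in> {..<K}" "b \<in> {..<K}" "(a + r) mod K = (b + r) mod K"
  then have "int K dvd int a - int b" by (simp add: mod_eq_iff_dvd_symdiff_nat)
  moreover have "\<bar>int a - int b\<bar> < int K" using \<open>a \<in> {..<K}\<close> \<open>b \<in> {..<K}\<close> by auto
  ultimately show "a = b" using dvd_imp_le_int[of "int a - int b" "int K"] by fastforce
qed

lemma sum_rotate: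
  fixes g :: "nat \<Rightarrow> 'a::comm_monoid_add"
  assumes "0 < K"
  shows "(\<Sum>j<K. g ((j + r) mod K)) = (\<Sum>j<K. g j)"
  using assms by (intro sum_reindex_inj_endo inj_on_add_mod) auto

(* The set is a down-set, hence {..x0} or {..<x0}; in the second case its measure is the
   left limit of the cdf at x0. *)
lemma (in real_distribution) measure_cdf_less_le:
  assumes "0 \<le> t"
  shows "measure M {x. cdf M x < t} \<le> t"
proof -
  define U where "U = {x. cdf M x < t}"
  have down: "x \<in> U" if "y \<in> U" "x \<le> y" for x y
    using that cdf_nondecreasing[of x y] by (auto simp: U_def)
  consider "U = {}" | "U = UNIV" | "U \<noteq> {}" "bdd_above U"
    by (metis UNIV_eq_I bdd_above_def down linorder_le_cases)
  then show ?thesis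
  proof cases
    case 1
    then show ?thesis using assms by (simp add: U_def)
  next
    case 2
    then have "\<forall>x. cdf M x < t" by (auto simp: U_def)
    then have "1 \<le> t"
      by (intro tendsto_upperbound[OF cdf_lim_at_top_prob]) (auto intro: less_imp_le always_eventually)
    then show ?thesis using prob_le_1 by (rule order_trans[rotated])
  next
    case 3
    define x0 where "x0 = Sup U"
    have below: "u \<le> x0" if "u \<in> U" for u using 3 that by (simp add: x0_def cSup_upper)
    show ?thesis
    proof (cases "x0 \<in> U")
      case True
      then have "U = {..x0}" using below down by auto
      then have "measure M U = cdf M x0" by (simp add: cdf_def)
      also have "\<dots> < t" using True by (simp add: U_def)
      finally show ?thesis by (simp add: U_def)
    next
      case False
      have "U = {..<x0}"
      proof (intro set_eqI iffI)
        fix u assume "u \<in> {..<x0}"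
        then obtain v where "v \<in> U" "u < v" using less_cSupE[of u U] 3 by (auto simp: x0_def)
        then show "u \<in> U" using down by auto
      qed (use below False in \<open>fastforce simp: order.order_iff_strict\<close>)
      then have "measure M U = measure M {..<x0}" by simp
      also have "\<dots> \<le> t"
      proof (rule tendsto_upperbound[OF cdf_at_left])
        show "\<forall>\<^sub>F x in at_left x0. cdf M x \<le> t"
          using eventually_at_left_real[of "x0 - 1" x0]
          by (rule eventually_mono) (use \<open>U = {..<x0}\<close> in \<open>auto simp: U_def set_eq_iff less_imp_le\<close>)
      qed simp
      finally show ?thesis by (simp add: U_def)
    qed
  qed
qed

lemma (in real_distribution) prob_cdf_ge:
  assumes "0 \<le> t"
  shows "1 - t \<le> measure M {x. t \<le> cdf M x}"
proof -
  have "mono (cdf M)" by (auto intro: monoI cdf_nondecreasing)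
  then have "{x. cdf M x < t} \<in> events"
    using borel_measurable_mono by (simp add: events_eq_borel) measurable
  have "measure M {x. t \<le> cdf M x} = measure M (space M - {x. cdf M x < t})"
    by (rule arg_cong[where f = "measure M"]) (auto simp: not_less)
  also have "\<dots> = 1 - measure M {x. cdf M x < t}"
    using \<open>{x. cdf M x < t} \<in> events\<close> by (rule prob_compl)
  finally show ?thesis using measure_cdf_less_le[OF assms] by simp
qed

lemma borel_measurable_PiM_coordinate:
  assumes "sets \<mu> = sets borel"
  shows "(\<lambda>\<omega>. \<omega> i) \<in> borel_measurable (PiM I (\<lambda>_. \<mu>))"
proof (cases "i \<in> I")
  case True
  then show ?thesis
    using measurable_component_singleton[of i I "\<lambda>_. \<mu>"] by (simp add: measurable_cong_sets[OF refl assms])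
next
  case False
  have "(\<lambda>_. undefined) \<in> borel_measurable (PiM I (\<lambda>_. \<mu>))" by simp
  then show ?thesis
    by (rule measurable_cong[THEN iffD1, rotated]) (use False in \<open>auto simp: space_PiM PiE_def extensional_def\<close>)
qed

definition conv_pow :: "real measure \<Rightarrow> nat \<Rightarrow> real measure" where
  "conv_pow \<mu> n = distr (PiM {..<n} (\<lambda>_. \<mu>)) borel (\<lambda>x. \<Sum>i<n. x i)"

lemma real_distribution_conv_pow:
  assumes "real_distribution \<mu>"
  shows "real_distribution (conv_pow \<mu> n)"
proof -
  interpret real_distribution \<mu> by fact
  interpret P: prob_space "PiM {..<n} (\<lambda>_. \<mu>)" by (intro prob_space_PiM prob_space_axioms)
  note borel_measurable_PiM_coordinate[OF events_eq_borel, measurable]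
  show ?thesis unfolding conv_pow_def by (intro P.real_distribution_distr) measurable
qed

lemma cdf_conv_pow:
  assumes "real_distribution \<mu>"
  shows "cdf (conv_pow \<mu> n) = conv_pow_cdf \<mu> n"
proof
  fix x
  interpret real_distribution \<mu> by fact
  note borel_measurable_PiM_coordinate[OF events_eq_borel, measurable]
  have "(\<lambda>x. \<Sum>i<n. x i) \<in> borel_measurable (PiM {..<n} (\<lambda>_. \<mu>))" by measurable
  then show "cdf (conv_pow \<mu> n) x = conv_pow_cdf \<mu> n x"
    by (simp add: cdf_def conv_pow_def conv_pow_cdf_def measure_distr vimage_def Int_def conj_commute)
qed

lemma distr_PiM_sum:
  fixes J :: "'i set"
  assumes "real_distribution \<mu>" "finite J" "J \<subseteq> I"
  shows "distr (PiM I (\<lambda>_. \<mu>)) borel (\<lambda>\<omega>. \<Sum>i\<in>J. \<omega> i) = conv_pow \<mu> (card J)"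
proof -
  interpret real_distribution \<mu> by fact
  obtain h where h: "bij_betw h {..<card J} J"
    using ex_bij_betw_nat_finite[OF assms(2)] by (auto simp: atLeast0LessThan)
  define R where "R \<omega> = (\<lambda>n\<in>{..<card J}. \<omega> (h n))" for \<omega> :: "'i \<Rightarrow> real"
  have hJ: "inj_on h {..<card J}" "h \<in> {..<card J} \<rightarrow> I"
    using h assms(3) by (auto simp: bij_betw_def)
  have R: "R \<in> measurable (PiM I (\<lambda>_. \<mu>)) (PiM {..<card J} (\<lambda>_. \<mu>))"
    unfolding R_def using hJ by (intro measurable_restrict measurable_component_singleton) auto
  have "distr (PiM I (\<lambda>_. \<mu>)) (PiM {..<card J} (\<lambda>_. \<mu>)) R = PiM {..<card J} (\<lambda>_. \<mu>)"
    unfolding R_def using distr_PiM_reindex[of I "\<lambda>_. \<mu>" h "{..<card J}"] hJ prob_space_axioms by simp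
  then have "conv_pow \<mu> (card J) =
      distr (distr (PiM I (\<lambda>_. \<mu>)) (PiM {..<card J} (\<lambda>_. \<mu>)) R) borel (\<lambda>x. \<Sum>i<card J. x i)"
    by (simp add: conv_pow_def)
  also have "\<dots> = distr (PiM I (\<lambda>_. \<mu>)) borel (\<lambda>\<omega>. \<Sum>i<card J. R \<omega> i)"
    using R by (subst distr_distr) (auto simp: comp_def)
  also have "\<dots> = distr (PiM I (\<lambda>_. \<mu>)) borel (\<lambda>\<omega>. \<Sum>i\<in>J. \<omega> i)"
    by (rule distr_cong) (auto simp: R_def sum.reindex_bij_betw[OF h])
  finally show ?thesis ..
qed

lemma emeasure_PiM_sum:
  fixes J :: "'i set"
  assumes "real_distribution \<mu>" "finite J" "J \<subseteq> I" "P \<in> sets borel"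
  shows "emeasure (PiM I (\<lambda>_. \<mu>)) {\<omega> \<in> space (PiM I (\<lambda>_. \<mu>)). (\<Sum>i\<in>J. \<omega> i) \<in> P}
    = emeasure (conv_pow \<mu> (card J)) P"
proof -
  have "(\<lambda>\<omega>. \<Sum>i\<in>J. \<omega> i) \<in> borel_measurable (PiM I (\<lambda>_. \<mu>))"
    using real_distribution.events_eq_borel[OF assms(1)]
    by (intro borel_measurable_sum borel_measurable_PiM_coordinate)
  from emeasure_distr[OF this assms(4)] show ?thesis
    by (simp add: distr_PiM_sum[OF assms(1-3)] vimage_def Int_def conj_commute)
qed

lemma borel_measurable_emeasure_translate:
  fixes U :: "real set"
  assumes "sets \<mu> = sets borel" "real_distribution \<nu>" "U \<in> sets borel"
  shows "(\<lambda>c. emeasure \<nu> {s. c + s \<in> U}) \<in> borel_measurable \<mu>"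
proof -
  interpret \<nu>: real_distribution \<nu> by fact
  have "(\<lambda>p. fst p + snd p) -` U \<inter> space (borel \<Otimes>\<^sub>M borel) \<in> sets (borel \<Otimes>\<^sub>M borel :: (real \<times> real) measure)"
    by (rule measurable_sets[OF _ assms(3)]) measurable
  then have "{(c, s). c + s \<in> U} \<in> sets (\<mu> \<Otimes>\<^sub>M \<nu>)"
    unfolding sets_pair_measure_cong[OF assms(1) \<nu>.events_eq_borel]
    by (simp add: space_pair_measure vimage_def case_prod_unfold)
  from \<nu>.measurable_emeasure_Pair[OF this] show ?thesis by (simp add: vimage_def)
qed

lemma indep_vars_PiM_coordinates:
  assumes "prob_space \<mu>"
  shows "prob_space.indep_vars (PiM I (\<lambda>_. \<mu>)) (\<lambda>_. \<mu>) (\<lambda>i \<omega>. \<omega> i) I"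
proof -
  interpret P: prob_space "PiM I (\<lambda>_. \<mu>)" by (intro prob_space_PiM assms)
  show ?thesis
  proof (cases "I = {}")
    case True
    then show ?thesis unfolding P.indep_vars_def P.indep_sets_def by simp
  next
    case False
    have "distr (PiM I (\<lambda>_. \<mu>)) (PiM I (\<lambda>_. \<mu>)) (\<lambda>\<omega>. \<lambda>i\<in>I. \<omega> i) = PiM I (\<lambda>_. \<mu>)"
      using distr_PiM_reindex[of I "\<lambda>_. \<mu>" "\<lambda>i. i" I] assms by simp
    moreover have "PiM I (\<lambda>i. distr (PiM I (\<lambda>_. \<mu>)) \<mu> (\<lambda>\<omega>. \<omega> i)) = PiM I (\<lambda>_. \<mu>)"
      by (intro PiM_cong refl distr_PiM_component) (use assms in auto)
    ultimately show ?thesis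
      using False by (subst P.indep_vars_iff_distr_eq_PiM') (auto intro: measurable_component_singleton)
  qed
qed

lemma measure_PiM_sums_disjoint:
  fixes J1 J2 :: "'i set"
  assumes "real_distribution \<mu>" "J1 \<inter> J2 = {}" "J1 \<subseteq> I" "J2 \<subseteq> I" "U \<in> sets borel" "V \<in> sets borel"
  shows "measure (PiM I (\<lambda>_. \<mu>)) {\<omega> \<in> space (PiM I (\<lambda>_. \<mu>)). (\<Sum>i\<in>J1. \<omega> i) \<in> U \<and> (\<Sum>i\<in>J2. \<omega> i) \<in> V}
    = measure (PiM I (\<lambda>_. \<mu>)) {\<omega> \<in> space (PiM I (\<lambda>_. \<mu>)). (\<Sum>i\<in>J1. \<omega> i) \<in> U}
    * measure (PiM I (\<lambda>_. \<mu>)) {\<omega> \<in> space (PiM I (\<lambda>_. \<mu>)). (\<Sum>i\<in>J2. \<omega> i) \<in> V}"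
proof -
  interpret real_distribution \<mu> by fact
  interpret P: prob_space "PiM I (\<lambda>_. \<mu>)" by (intro prob_space_PiM prob_space_axioms)
  have sum_measurable: "(\<lambda>x. \<Sum>i\<in>J. x i) \<in> borel_measurable (PiM J (\<lambda>_. \<mu>))" for J :: "'i set"
    by (intro borel_measurable_sum borel_measurable_PiM_coordinate events_eq_borel)
  have "P.indep_var borel ((\<lambda>x. \<Sum>i\<in>J1. x i) \<circ> (\<lambda>\<omega>. restrict \<omega> J1))
                    borel ((\<lambda>x. \<Sum>i\<in>J2. x i) \<circ> (\<lambda>\<omega>. restrict \<omega> J2))"
    using P.indep_var_restrict[OF indep_vars_PiM_coordinates[OF prob_space_axioms] assms(2-4)]
    by (intro P.indep_var_compose sum_measurable) auto
  from P.indep_varD[OF this assms(5,6)] show ?thesis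
    by (simp add: vimage_def Int_def conj_commute conj_left_commute)
qed

lemma emeasure_PiM_split_coordinate:
  assumes "prob_space \<mu>" "k \<in> I" "S \<in> sets (PiM I (\<lambda>_. \<mu>))"
  shows "emeasure (PiM I (\<lambda>_. \<mu>)) S =
    (\<integral>\<^sup>+c. emeasure (PiM (I - {k}) (\<lambda>_. \<mu>)) {X \<in> space (PiM (I - {k}) (\<lambda>_. \<mu>)). X(k := c) \<in> S} \<partial>\<mu>)"
proof -
  define R where "R = PiM (I - {k}) (\<lambda>_. \<mu>)"
  interpret R: prob_space R unfolding R_def by (intro prob_space_PiM assms(1))
  have I: "insert k (I - {k}) = I" using assms(2) by auto
  have upd: "(\<lambda>(c, X). X(k := c)) \<in> measurable (\<mu> \<Otimes>\<^sub>M R) (PiM I (\<lambda>_. \<mu>))"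
    unfolding R_def by (subst I[symmetric]) measurable
  have "distr (\<mu> \<Otimes>\<^sub>M R) (PiM I (\<lambda>_. \<mu>)) (\<lambda>(c, X). X(k := c)) = PiM I (\<lambda>_. \<mu>)"
    using distr_pair_PiM_eq_PiM[of "I - {k}" "\<lambda>_. \<mu>" k] assms(1) unfolding I R_def by simp
  then have "emeasure (PiM I (\<lambda>_. \<mu>)) S = emeasure (\<mu> \<Otimes>\<^sub>M R) ((\<lambda>(c, X). X(k := c)) -` S \<inter> space (\<mu> \<Otimes>\<^sub>M R))"
    by (metis emeasure_distr[OF upd assms(3)])
  also have "\<dots> = (\<integral>\<^sup>+c. emeasure R (Pair c -` ((\<lambda>(c, X). X(k := c)) -` S \<inter> space (\<mu> \<Otimes>\<^sub>M R))) \<partial>\<mu>)"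
    using measurable_sets[OF upd assms(3)] by (rule R.emeasure_pair_measure_alt)
  also have "\<dots> = (\<integral>\<^sup>+c. emeasure R {X \<in> space R. X(k := c) \<in> S} \<partial>\<mu>)"
    by (intro nn_integral_cong arg_cong2[where f=emeasure] refl) (auto simp: space_pair_measure)
  finally show ?thesis by (simp add: R_def)
qed

lemma measure_PiM_sums_sharing_coordinate:
  fixes L1 L2 :: "'i set"
  assumes \<mu>: "real_distribution \<mu>"
    and L: "finite L1" "finite L2" "L1 \<inter> L2 = {k}" "card L1 = card L2" "L1 \<union> L2 \<subseteq> I"
    and U: "U \<in> sets borel"
  shows "measure (PiM I (\<lambda>_. \<mu>)) {\<omega> \<in> space (PiM I (\<lambda>_. \<mu>)). (\<Sum>i\<in>L1. \<omega> i) \<in> U} ^ 2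
    \<le> measure (PiM I (\<lambda>_. \<mu>)) {\<omega> \<in> space (PiM I (\<lambda>_. \<mu>)). (\<Sum>i\<in>L1. \<omega> i) \<in> U \<and> (\<Sum>i\<in>L2. \<omega> i) \<in> U}"
    (is "measure ?M ?S1 ^ 2 \<le> measure ?M ?S12")
proof -
  interpret real_distribution \<mu> by fact
  interpret M: prob_space ?M by (intro prob_space_PiM prob_space_axioms)
  define R where "R = PiM (I - {k}) (\<lambda>_. \<mu>)"
  interpret R: prob_space R unfolding R_def by (intro prob_space_PiM prob_space_axioms)
  define F where "F c = emeasure (conv_pow \<mu> (card L1 - 1)) {s. c + s \<in> U}" for c
  note borel_measurable_PiM_coordinate[OF events_eq_borel, measurable]
  have k: "k \<in> L1" "k \<in> L2" "k \<in> I" using L by auto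
  have J: "(L1 - {k}) \<inter> (L2 - {k}) = {}" "L1 - {k} \<subseteq> I - {k}" "L2 - {k} \<subseteq> I - {k}"
    "card (L1 - {k}) = card L1 - 1" "card (L2 - {k}) = card L1 - 1"
    using L k by auto
  have U_shift: "{s. c + s \<in> U} \<in> sets borel" for c
    using measurable_sets[OF _ U, of "\<lambda>s. c + s" borel] by (simp add: vimage_def)
  have upd_space: "X(k := c) \<in> space ?M" if "X \<in> space R" for X c
    using that k by (auto simp: R_def space_PiM PiE_iff extensional_def)
  have block1: "emeasure R {X \<in> space R. (\<Sum>i\<in>L1 - {k}. X i) \<in> {s. c + s \<in> U}} = F c"
    and block2: "emeasure R {X \<in> space R. (\<Sum>i\<in>L2 - {k}. X i) \<in> {s. c + s \<in> U}} = F c" for c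
    using emeasure_PiM_sum[OF \<mu> _ _ U_shift[of c], where I = "I - {k}" and J = "L1 - {k}"]
      emeasure_PiM_sum[OF \<mu> _ _ U_shift[of c], where I = "I - {k}" and J = "L2 - {k}"] J L
    unfolding R_def F_def by simp_all
  have "emeasure ?M ?S1 = (\<integral>\<^sup>+c. F c \<partial>\<mu>)"
  proof -
    have "{X \<in> space R. X(k := c) \<in> ?S1} = {X \<in> space R. (\<Sum>i\<in>L1 - {k}. X i) \<in> {s. c + s \<in> U}}" for c
      using upd_space by (auto simp: sum_fun_upd_remove[OF L(1) k(1)] simp del: fun_upd_apply)
    moreover have "?S1 \<in> sets ?M" using U by measurable
    ultimately show ?thesis
      using emeasure_PiM_split_coordinate[OF prob_space_axioms k(3)] block1 by (simp add: R_def)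
  qed
  moreover have "emeasure ?M ?S12 = (\<integral>\<^sup>+c. F c ^ 2 \<partial>\<mu>)"
  proof -
    have "{X \<in> space R. X(k := c) \<in> ?S12} =
      {X \<in> space R. (\<Sum>i\<in>L1 - {k}. X i) \<in> {s. c + s \<in> U} \<and> (\<Sum>i\<in>L2 - {k}. X i) \<in> {s. c + s \<in> U}}" for c
      using upd_space
      by (auto simp: sum_fun_upd_remove[OF L(1) k(1)] sum_fun_upd_remove[OF L(2) k(2)] simp del: fun_upd_apply)
    moreover have "emeasure R {X \<in> space R.
        (\<Sum>i\<in>L1 - {k}. X i) \<in> {s. c + s \<in> U} \<and> (\<Sum>i\<in>L2 - {k}. X i) \<in> {s. c + s \<in> U}} = F c ^ 2" for c
      using measure_PiM_sums_disjoint[OF \<mu> J(1-3) U_shift[of c] U_shift[of c]] block1[of c] block2[of c]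
      by (simp add: R_def[symmetric] R.emeasure_eq_measure ennreal_mult power2_eq_square)
    moreover have "?S12 \<in> sets ?M" using U by measurable
    ultimately show ?thesis
      using emeasure_PiM_split_coordinate[OF prob_space_axioms k(3)] by (simp add: R_def)
  qed
  moreover have "(\<integral>\<^sup>+c. F c \<partial>\<mu>) ^ 2 \<le> (\<integral>\<^sup>+c. F c ^ 2 \<partial>\<mu>)"
    using Cauchy_Schwarz_nn_integral[of F \<mu> "\<lambda>_. 1"] emeasure_space_1
      borel_measurable_emeasure_translate[OF events_eq_borel real_distribution_conv_pow[OF \<mu>] U]
    by (simp add: F_def[abs_def])
  ultimately have "ennreal (measure ?M ?S1 ^ 2) \<le> ennreal (measure ?M ?S12)"
    by (simp add: M.emeasure_eq_measure ennreal_power[symmetric])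
  then show ?thesis by simp
qed

definition partial_sums_above_chord :: "nat \<Rightarrow> (nat \<Rightarrow> real) \<Rightarrow> bool" where
  "partial_sums_above_chord K d \<longleftrightarrow> (\<forall>m\<le>K. real m / real K * (\<Sum>j<K. d j) \<le> (\<Sum>j<m. d j))"

lemma partial_sums_above_chord_cong:
  assumes "\<And>j. j < K \<Longrightarrow> d j = d' j"
  shows "partial_sums_above_chord K d \<longleftrightarrow> partial_sums_above_chord K d'"
proof -
  have "(\<Sum>j<m. d j) = (\<Sum>j<m. d' j)" if "m \<le> K" for m
    using assms that by (intro sum.cong) auto
  then show ?thesis unfolding partial_sums_above_chord_def by auto
qed

(* The cycle lemma: start at a minimum of the partial sums of d minus its mean. *)
lemma exists_rotation_partial_sums_above_chord:
  fixes d :: "nat \<Rightarrow> real"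
  assumes "0 < K"
  shows "\<exists>r<K. partial_sums_above_chord K (\<lambda>j. d ((j + r) mod K))"
proof -
  define s where "s = (\<Sum>j<K. d j)"
  define Q where "Q n = (\<Sum>j<n. d (j mod K) - s / K)" for n
  have Q_periodic: "Q (n + K) = Q n" for n
  proof -
    have "Q K = 0" using assms by (simp add: Q_def s_def sum_subtractf)
    then show ?thesis
      using sum_lessThan_shift[where f = "\<lambda>j. d (j mod K) - s / K" and m = n and r = K] by (simp add: Q_def)
  qed
  obtain r where r: "r < K" "\<And>n. n < K \<Longrightarrow> Q r \<le> Q n"
    using arg_min_if_finite[of "{..<K}" Q] assms by (auto simp: not_less)
  have "partial_sums_above_chord K (\<lambda>j. d ((j + r) mod K))"
    unfolding partial_sums_above_chord_def
  proof (intro allI impI)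
    fix m assume "m \<le> K"
    have "Q r \<le> Q (m + r)"
    proof (cases "m + r < K")
      case False
      then have "m + r = (m + r - K) + K" "m + r - K < K" using \<open>m \<le> K\<close> r(1) by auto
      then show ?thesis using r(2) Q_periodic by metis
    qed (rule r(2))
    then have "0 \<le> (\<Sum>j<m. d ((j + r) mod K) - s / K)"
      using sum_lessThan_shift[where f = "\<lambda>j. d (j mod K) - s / K" and m = m and r = r] by (simp add: Q_def)
    then show "real m / real K * (\<Sum>j<K. d ((j + r) mod K)) \<le> (\<Sum>j<m. d ((j + r) mod K))"
      using sum_rotate[OF assms, of d r] by (simp add: sum_subtractf s_def)
  qed
  then show ?thesis using r(1) by blast
qed

lemma window_sum_eq:
  fixes \<omega> :: "nat \<Rightarrow> 'a::ab_group_add"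
  shows "(\<Sum>i=l..l+K. \<omega> i) = (\<Sum>i=0..K. \<omega> i) + (\<Sum>j<l. \<omega> (Suc K + j) - \<omega> j)"
proof (induction l)
  case (Suc l)
  have "(\<Sum>i=l..l+K. \<omega> i) + \<omega> (Suc (l + K)) = \<omega> l + (\<Sum>i=Suc l..Suc l+K. \<omega> i)"
    by (simp add: sum.atLeast_Suc_atMost[symmetric] sum.cl_ivl_Suc)
  then show ?case using Suc by (simp add: algebra_simps)
qed simp

lemma window_sum_ge_min:
  fixes \<omega> :: "nat \<Rightarrow> real"
  assumes "partial_sums_above_chord K (\<lambda>j. \<omega> (Suc K + j) - \<omega> j)" "l \<le> K"
  shows "min (\<Sum>i=0..K. \<omega> i) (\<Sum>i=K..K+K. \<omega> i) \<le> (\<Sum>i=l..l+K. \<omega> i)"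
proof -
  define D where "D m = (\<Sum>j<m. \<omega> (Suc K + j) - \<omega> j)" for m
  define frac where "frac = real l / real K"
  have frac: "0 \<le> frac" "frac \<le> 1" using assms(2) by (auto simp: frac_def divide_le_eq_1)
  have window: "(\<Sum>i=m..m+K. \<omega> i) = (\<Sum>i=0..K. \<omega> i) + D m" for m
    unfolding D_def by (rule window_sum_eq)
  have "min 0 (D K) \<le> frac * D K"
    using frac mult_left_le_one_le[of "D K" frac] mult_nonneg_nonneg[of frac "D K"] by (cases "D K \<ge> 0") auto
  also have "frac * D K \<le> D l"
    using assms unfolding partial_sums_above_chord_def D_def frac_def by simp
  finally show ?thesis using window[of K] window[of l] by simp
qed

definition rotate_blocks :: "nat \<Rightarrow> nat \<Rightarrow> nat \<Rightarrow> nat" where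
  "rotate_blocks K r n =
    (if n < K then (n + r) mod K
     else if K < n \<and> n \<le> 2 * K then Suc K + (n - Suc K + r) mod K
     else n)"

lemma inj_rotate_blocks:
  assumes "0 < K"
  shows "inj (rotate_blocks K r)"
proof (rule injI)
  fix a b assume eq: "rotate_blocks K r a = rotate_blocks K r b"
  have first: "rotate_blocks K r n < K" if "n < K" for n
    using that by (simp add: rotate_blocks_def)
  have second: "K < rotate_blocks K r n \<and> rotate_blocks K r n \<le> 2 * K" if "K < n \<and> n \<le> 2 * K" for n
    using that assms by (simp add: rotate_blocks_def Suc_le_eq)
  have other: "rotate_blocks K r n = n" if "n = K \<or> 2 * K < n" for n
    using that by (auto simp: rotate_blocks_def)
  have regions: "(rotate_blocks K r n < K \<longleftrightarrow> n < K) \<and> (K < rotate_blocks K r n \<longleftrightarrow> K < n)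
      \<and> (rotate_blocks K r n \<le> 2 * K \<longleftrightarrow> n \<le> 2 * K)" for n
  proof -
    consider "n < K" | "K < n \<and> n \<le> 2 * K" | "n = K \<or> 2 * K < n" by linarith
    then show ?thesis using first[of n] second[of n] other[of n] by cases auto
  qed
  have same_region: "a < K \<longleftrightarrow> b < K" "K < a \<longleftrightarrow> K < b" "a \<le> 2 * K \<longleftrightarrow> b \<le> 2 * K"
    using regions[of a] regions[of b] eq by simp_all
  consider "a < K" | "K < a \<and> a \<le> 2 * K" | "a = K \<or> 2 * K < a" by linarith
  then show "a = b"
  proof cases
    case 1
    with eq same_region have "(a + r) mod K = (b + r) mod K" by (simp add: rotate_blocks_def)
    then show ?thesis using inj_on_eq_iff[OF inj_on_add_mod[of r K], of a b] 1 same_region by simp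
  next
    case 2
    with eq same_region have "(a - Suc K + r) mod K = (b - Suc K + r) mod K"
      by (simp add: rotate_blocks_def)
    moreover have "a - Suc K < K" "b - Suc K < K" using 2 same_region by auto
    ultimately have "a - Suc K = b - Suc K"
      using inj_on_eq_iff[OF inj_on_add_mod[of r K], of "a - Suc K" "b - Suc K"] by simp
    then show ?thesis using 2 same_region by arith
  next
    case 3
    then have "b = K \<or> 2 * K < b" using same_region by auto
    then show ?thesis using eq other[of a] other[of b] 3 by simp
  qed
qed

lemma rotate_blocks_lessThan:
  assumes "2 * K < N" "n < N"
  shows "rotate_blocks K r n < N"
proof (cases "n < K \<or> K < n \<and> n \<le> 2 * K")
  case True
  then have "0 < K" by auto
  then have "x mod K < N" "Suc (K + x mod K) < N" for x
    using mod_less_divisor[of K x] assms(1) by linarith+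
  then show ?thesis using True by (auto simp: rotate_blocks_def)
qed (use assms in \<open>auto simp: rotate_blocks_def\<close>)

lemma sum_rotate_blocks_windows:
  fixes \<omega> :: "nat \<Rightarrow> 'a::comm_monoid_add"
  assumes "0 < K"
  shows "(\<Sum>i=0..K. \<omega> (rotate_blocks K r i)) = (\<Sum>i=0..K. \<omega> i)"
    and "(\<Sum>i=K..K+K. \<omega> (rotate_blocks K r i)) = (\<Sum>i=K..K+K. \<omega> i)"
proof -
  have inj: "inj_on (rotate_blocks K r) A" for A
    using inj_rotate_blocks[OF assms] by (rule inj_on_subset) simp
  have "rotate_blocks K r ` {0..K} \<subseteq> {0..K}" "rotate_blocks K r ` {K..K+K} \<subseteq> {K..K+K}"
    using assms by (auto simp: rotate_blocks_def Suc_le_eq less_imp_le)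
  then show "(\<Sum>i=0..K. \<omega> (rotate_blocks K r i)) = (\<Sum>i=0..K. \<omega> i)"
    and "(\<Sum>i=K..K+K. \<omega> (rotate_blocks K r i)) = (\<Sum>i=K..K+K. \<omega> i)"
    using inj by (auto intro: sum_reindex_inj_endo)
qed

lemma rotate_blocks_increments:
  assumes "j < K"
  shows "\<omega> (rotate_blocks K r (Suc K + j)) - \<omega> (rotate_blocks K r j) =
    \<omega> (Suc K + (j + r) mod K) - \<omega> ((j + r) mod K)"
  using assms by (simp add: rotate_blocks_def)

lemma (in finite_measure) measure_le_card_mult_of_preimage_cover:
  assumes "finite R" "\<And>r. r \<in> R \<Longrightarrow> T r \<in> measurable M M" "\<And>r. r \<in> R \<Longrightarrow> distr M M (T r) = M"
    and "C \<in> sets M" "A \<subseteq> (\<Union>r\<in>R. T r -` C \<inter> space M)"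
  shows "measure M A \<le> card R * measure M C"
proof -
  have preimage: "T r -` C \<inter> space M \<in> sets M" if "r \<in> R" for r
    using measurable_sets[OF assms(2)[OF that] assms(4)] .
  have "measure M A \<le> measure M (\<Union>r\<in>R. T r -` C \<inter> space M)"
    by (rule finite_measure_mono[OF assms(5)]) (intro sets.finite_UN assms(1) preimage)
  also have "\<dots> \<le> (\<Sum>r\<in>R. measure M (T r -` C \<inter> space M))"
    using assms(1) preimage by (intro finite_measure_subadditive_finite) auto
  also have "\<dots> = (\<Sum>r\<in>R. measure M C)"
    using assms(2-4) by (intro sum.cong refl) (metis measure_distr)
  finally show ?thesis by simp
qed

lemma measure_windows_le_mult_above_chord:
  fixes \<mu> :: "real measure" and K N :: nat
  defines "M \<equiv> PiM {..<N} (\<lambda>_. \<mu>)"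
  assumes \<mu>: "real_distribution \<mu>" and K: "0 < K" "2 * K < N" and U: "U \<in> sets borel"
  shows "measure M {\<omega> \<in> space M. (\<Sum>i=0..K. \<omega> i) \<in> U \<and> (\<Sum>i=K..K+K. \<omega> i) \<in> U}
    \<le> K * measure M {\<omega> \<in> space M. (\<Sum>i=0..K. \<omega> i) \<in> U \<and> (\<Sum>i=K..K+K. \<omega> i) \<in> U
                        \<and> partial_sums_above_chord K (\<lambda>j. \<omega> (Suc K + j) - \<omega> j)}"
    (is "measure M ?A \<le> _ * measure M ?C")
proof -
  interpret real_distribution \<mu> by fact
  interpret M: prob_space M unfolding M_def by (intro prob_space_PiM prob_space_axioms)
  have [measurable]: "(\<lambda>\<omega>. \<omega> i) \<in> borel_measurable M" for i
    unfolding M_def by (rule borel_measurable_PiM_coordinate[OF events_eq_borel])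
  define T where "T r = (\<lambda>\<omega>::nat \<Rightarrow> real. \<lambda>n\<in>{..<N}. \<omega> (rotate_blocks K r n))" for r
  have rotate: "inj_on (rotate_blocks K r) {..<N}" "rotate_blocks K r \<in> {..<N} \<rightarrow> {..<N}" for r
    using inj_rotate_blocks[OF K(1)] rotate_blocks_lessThan[OF K(2)] by (auto intro: inj_on_subset)
  have T_measurable: "T r \<in> measurable M M" for r
    unfolding T_def M_def using rotate by (intro measurable_restrict measurable_component_singleton) auto
  have T_preserving: "distr M M (T r) = M" for r
    using distr_PiM_reindex[of "{..<N}" "\<lambda>_. \<mu>" "rotate_blocks K r" "{..<N}"] rotate prob_space_axioms
    by (simp add: M_def T_def)
  \<comment> \<open>phrased with \<open><\<close>: only strict inequalities are recognised as measurable predicates\<close>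
  have chord_pred: "partial_sums_above_chord K d \<longleftrightarrow>
      (\<forall>m\<in>{..K}. \<not> (\<Sum>j<m. d j) < real m / real K * (\<Sum>j<K. d j))" for d
    by (auto simp: partial_sums_above_chord_def not_less)
  have "?C \<in> sets M"
    using U unfolding chord_pred by measurable
  moreover have "?A \<subseteq> (\<Union>r\<in>{..<K}. T r -` ?C \<inter> space M)"
  proof
    fix \<omega> assume \<omega>: "\<omega> \<in> ?A"
    define d where "d j = \<omega> (Suc K + j) - \<omega> j" for j
    obtain r where r: "r < K" "partial_sums_above_chord K (\<lambda>j. d ((j + r) mod K))"
      using exists_rotation_partial_sums_above_chord[OF K(1)] by blast
    have T_eq: "T r \<omega> i = \<omega> (rotate_blocks K r i)" if "i \<le> K + K" for i
      using that K(2) by (simp add: T_def)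
    have "(\<Sum>i=0..K. T r \<omega> i) = (\<Sum>i=0..K. \<omega> i)" "(\<Sum>i=K..K+K. T r \<omega> i) = (\<Sum>i=K..K+K. \<omega> i)"
      using sum_rotate_blocks_windows[OF K(1), of \<omega> r] by (simp_all add: T_eq)
    moreover have "T r \<omega> (Suc K + j) - T r \<omega> j = d ((j + r) mod K)" if "j < K" for j
      using that K(2) rotate_blocks_increments[OF that, of \<omega> r] by (simp add: T_def d_def)
    then have "partial_sums_above_chord K (\<lambda>j. T r \<omega> (Suc K + j) - T r \<omega> j)"
      using partial_sums_above_chord_cong[of K "\<lambda>j. T r \<omega> (Suc K + j) - T r \<omega> j" "\<lambda>j. d ((j + r) mod K)"] r(2)
      by simp
    moreover have "T r \<omega> \<in> space M" using \<omega> measurable_space[OF T_measurable] by blast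
    ultimately have "T r \<omega> \<in> ?C" using \<omega> by simp
    then show "\<omega> \<in> (\<Union>r\<in>{..<K}. T r -` ?C \<inter> space M)" using \<omega> r(1) by blast
  qed
  ultimately show ?thesis
    using M.measure_le_card_mult_of_preimage_cover[OF finite_lessThan T_measurable T_preserving] by simp
qed

lemma Min_windows_ge_if_end_windows_ge:
  fixes \<omega> :: "nat \<Rightarrow> real" and G :: "real \<Rightarrow> real"
  assumes "mono G" "2 * K < N" "t \<le> G (\<Sum>i=0..K. \<omega> i)" "t \<le> G (\<Sum>i=K..K+K. \<omega> i)"
    and "partial_sums_above_chord K (\<lambda>j. \<omega> (Suc K + j) - \<omega> j)"
  shows "t \<le> Min ((\<lambda>l. G (\<Sum>i=l..l+K. \<omega> (i mod N))) ` {0..K})"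
proof -
  have "t \<le> G (\<Sum>i=l..l+K. \<omega> (i mod N))" if "l \<le> K" for l
  proof -
    have "(\<Sum>i=l..l+K. \<omega> (i mod N)) = (\<Sum>i=l..l+K. \<omega> i)"
      using that assms(2) by (intro sum.cong) auto
    then have "min (\<Sum>i=0..K. \<omega> i) (\<Sum>i=K..K+K. \<omega> i) \<le> (\<Sum>i=l..l+K. \<omega> (i mod N))"
      using window_sum_ge_min[OF assms(5) that] by simp
    with assms(1) have "G (min (\<Sum>i=0..K. \<omega> i) (\<Sum>i=K..K+K. \<omega> i)) \<le> G (\<Sum>i=l..l+K. \<omega> (i mod N))"
      by (rule monoD)
    moreover have "t \<le> G (min (\<Sum>i=0..K. \<omega> i) (\<Sum>i=K..K+K. \<omega> i))"
      using assms(3,4) by (simp add: min_def)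
    ultimately show ?thesis by linarith
  qed
  then show ?thesis by (simp add: Min_ge_iff)
qed

lemma prob_all_windows_ge:
  fixes \<mu> :: "real measure" and K N :: nat
  defines "M \<equiv> PiM {..<N} (\<lambda>_. \<mu>)" and "G \<equiv> conv_pow_cdf \<mu> (K + 1)" and "t \<equiv> 1 - 1 / real K"
  assumes \<mu>: "real_distribution \<mu>" and K: "1 \<le> K" and N: "2 * (K + 1) \<le> N"
  shows "1 / real K ^ 3 \<le> measure M {\<omega> \<in> space M. Min ((\<lambda>l. G (\<Sum>i=l..l+K. \<omega> (i mod N))) ` {0..K}) \<ge> t}"
    (is "_ \<le> measure M ?E")
proof -
  interpret real_distribution \<mu> by fact
  interpret M: prob_space M unfolding M_def by (intro prob_space_PiM prob_space_axioms)
  define \<nu> where "\<nu> = conv_pow \<mu> (K + 1)"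
  interpret \<nu>: real_distribution \<nu> unfolding \<nu>_def by (rule real_distribution_conv_pow[OF \<mu>])
  have G: "G = cdf \<nu>" by (simp add: G_def \<nu>_def cdf_conv_pow[OF \<mu>])
  have G_mono: "mono G" unfolding G by (auto intro: monoI \<nu>.cdf_nondecreasing)
  have [measurable]: "G \<in> borel_measurable borel" using G_mono by (rule borel_measurable_mono)
  have [measurable]: "(\<lambda>\<omega>. \<omega> i) \<in> borel_measurable M" for i
    unfolding M_def by (rule borel_measurable_PiM_coordinate[OF events_eq_borel])
  define U where "U = {s. t \<le> G s}"
  have U: "U \<in> sets borel" unfolding U_def by measurable
  define A where "A = {\<omega> \<in> space M. (\<Sum>i=0..K. \<omega> i) \<in> U \<and> (\<Sum>i=K..K+K. \<omega> i) \<in> U}"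
  define C where "C = {\<omega> \<in> space M. (\<Sum>i=0..K. \<omega> i) \<in> U \<and> (\<Sum>i=K..K+K. \<omega> i) \<in> U
                          \<and> partial_sums_above_chord K (\<lambda>j. \<omega> (Suc K + j) - \<omega> j)}"
  have "1 / real K \<le> measure \<nu> U"
    using \<nu>.prob_cdf_ge[of t] K by (simp add: U_def G t_def)
  also have "\<dots> = measure M {\<omega> \<in> space M. (\<Sum>i=0..K. \<omega> i) \<in> U}"
  proof -
    have window: "{0..K} \<subseteq> {..<N}" using N by auto
    show ?thesis by (simp add: emeasure_PiM_sum[OF \<mu> _ window U] measure_def M_def \<nu>_def)
  qed
  finally have "(1 / real K) ^ 2 \<le> measure M {\<omega> \<in> space M. (\<Sum>i=0..K. \<omega> i) \<in> U} ^ 2"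
    by (rule power_mono) simp
  also have "\<dots> \<le> measure M A"
    unfolding M_def A_def using N U by (intro measure_PiM_sums_sharing_coordinate[OF \<mu>, where k = K]) auto
  also have "\<dots> \<le> K * measure M C"
    unfolding M_def A_def C_def using K N U by (intro measure_windows_le_mult_above_chord[OF \<mu>]) auto
  also have "\<dots> \<le> K * measure M ?E"
  proof (intro mult_left_mono M.finite_measure_mono)
    show "C \<subseteq> ?E"
      using Min_windows_ge_if_end_windows_ge[OF G_mono, of K N t] N by (auto simp: C_def U_def)
    show "?E \<in> sets M" by measurable
  qed simp
  finally show ?thesis using K by (simp add: power2_eq_square power3_eq_cube field_simps)
qed

theorem mainTheorem3:
  shows "\<exists>c::real. c > 0 \<and>
    (\<forall>(\<mu>::real measure) (K::nat) (N::nat).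
       real_distribution \<mu> \<longrightarrow> (\<forall>x. isCont (cdf \<mu>) x) \<longrightarrow>
       K \<ge> 1 \<longrightarrow> N \<ge> 2 * (K + 1) \<longrightarrow>
       measure (PiM {..<N} (\<lambda>_. \<mu>))
         {\<omega> \<in> space (PiM {..<N} (\<lambda>_. \<mu>)).
            Min ((\<lambda>l. conv_pow_cdf \<mu> (K + 1) (\<Sum>i=l..l+K. \<omega> (i mod N))) ` {0..K})
              \<ge> 1 - 1 / real K}
       \<ge> c * real K powi (-3))"
proof (intro exI[of _ 1] conjI allI impI)
  fix \<mu> :: "real measure" and K N :: nat
  assume "real_distribution \<mu>" and "\<forall>x. isCont (cdf \<mu>) x" and "K \<ge> 1" and "N \<ge> 2 * (K + 1)"
  then show "1 * real K powi (-3) \<le> measure (PiM {..<N} (\<lambda>_. \<mu>))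
         {\<omega> \<in> space (PiM {..<N} (\<lambda>_. \<mu>)).
            Min ((\<lambda>l. conv_pow_cdf \<mu> (K + 1) (\<Sum>i=l..l+K. \<omega> (i mod N))) ` {0..K})
              \<ge> 1 - 1 / real K}"
    using prob_all_windows_ge[of \<mu> K N] by (simp add: power_int_minus divide_inverse)
qed simp

end
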